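(* Let $N\ge0$ be an integer. For generic complex $a,b,c,d,q$, the unique coefficients $C_k^l$ ($0\le k,l\le N$) in the polynomial identity $$(ax;q^{-1})_k\,(bx;q^{-1})_{N-k}=\sum_{l=0}^N C_k^l\,(cx;q)_l\,(dx;q)_{N-l}$$ are $$C_k^l=q^{l(l-N)}\binom{N}{l}_q\frac{(q^{1-N}b/d;q)_l\,(q^{1-N}b/c;q)_{N-l}\,(q^{1-k}a/c;q)_k}{(q^{l-N}c/d;q)_l\,(q^{-l}d/c;q)_{N-l}\,(q^{1-N}b/c;q)_k}\;{}_4\phi_3\!\left[\begin{matrix}q^{-k},q^{-l},q^{k-N}b/a,q^{l-N}c/d\\ q^{-N},c/a,q^{1-N}b/d\end{matrix};q,q\right].$$
   Context: $(a;q)_k=\prod_{j=0}^{k-1}(1-aq^j)$ (for any base, so $(a;q^{-1})_k=\prod_{j=0}^{k-1}(1-aq^{-j})$), $\binom{N}{l}_q=\frac{(q;q)_N}{(q;q)_l(q;q)_{N-l}}$, and ${}_4\phi_3\!\left[\begin{matrix}a_1,\dots,a_4\\ b_1,b_2,b_3\end{matrix};q,z\right]=\sum_{k\ge0}\frac{(a_1,\dots,a_4;q)_k}{(q,b_1,b_2,b_3;q)_k}z^k$ (terminating). *)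

theory Defs
  imports Complex_Main
begin

definition qpoch :: "complex \<Rightarrow> complex \<Rightarrow> nat \<Rightarrow> complex" where
  "qpoch a q k = (\<Prod>j<k. 1 - a * q ^ j)"

definition qbinom :: "complex \<Rightarrow> nat \<Rightarrow> nat \<Rightarrow> complex" where
  "qbinom q n l = qpoch q q n / (qpoch q q l * qpoch q q (n - l))"

text \<open>Terminating 4phi3 series, summed over j = 0..n (the series terminates at n
  because one numerator parameter is q^(-n)).\<close>
definition phi43 :: "nat \<Rightarrow> complex \<Rightarrow> complex \<Rightarrow> complex \<Rightarrow> complex \<Rightarrow>
    complex \<Rightarrow> complex \<Rightarrow> complex \<Rightarrow> complex \<Rightarrow> complex \<Rightarrow> complex" where
  "phi43 n a1 a2 a3 a4 b1 b2 b3 q z =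
     (\<Sum>j\<le>n. (qpoch a1 q j * qpoch a2 q j * qpoch a3 q j * qpoch a4 q j) /
              (qpoch q q j * qpoch b1 q j * qpoch b2 q j * qpoch b3 q j) * z ^ j)"

end

theory Submission
  imports Defs
begin

(*
  Both sides are polynomials of degree N in x, and the coefficients are obtained by composing
  two simpler changes of basis. A product (e x; r)_n is expanded in a basis
  (f x; s)_j (h x; r)_(n-j) one factor at a time: the new factor 1 - e r^n x is a linear
  combination of the next factors 1 - h r^(n-j) x and 1 - f s^j x of two neighbouring basis
  elements, which gives a Pascal-type recurrence for the coefficients. Closed forms satisfying
  it are verified for (e x; 1/q)_n in the basis (f x; q)_j (h x; 1/q)_(n-j) and for (e x; q)_n
  in the basis (f x; q)_l (g x; q)_(n-l).

  Expanding (a x; 1/q)_k in the basis (c x; q)_j (h x; 1/q)_(k-j) with h = b q^(k-N) turns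
  each term of (a x; 1/q)_k (b x; 1/q)_(N-k) into a multiple of (c x; q)_j (b x; 1/q)_(N-j), and
  the second expansion with f = c q^j, g = d writes (b x; 1/q)_(N-j) in the basis
  (c q^j x; q)_(l-j) (d x; q)_(N-l). The coefficient of
  (c x; q)_l (d x; q)_(N-l) is therefore a sum over j, whose j-th term is the j-th term of the
  4phi3 times its prefactor.
*)

section \<open>\<open>q\<close>-Pochhammer symbols\<close>

lemma qpoch_0 [simp]: "qpoch a q 0 = 1"
  by (simp add: qpoch_def)

lemma qpoch_Suc: "qpoch a q (Suc n) = qpoch a q n * (1 - a * q ^ n)"
  by (simp add: qpoch_def)

lemma qpoch_Suc_left: "qpoch a q (Suc n) = (1 - a) * qpoch (a * q) q n"
  unfolding qpoch_def by (subst prod.lessThan_Suc_shift) (simp add: mult.assoc)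

lemma qpoch_add: "qpoch a q (m + n) = qpoch a q m * qpoch (a * q ^ m) q n"
  by (induction n) (auto simp: qpoch_Suc power_add mult_ac)

lemma qpoch_eq_0_iff: "qpoch a q n = 0 \<longleftrightarrow> (\<exists>i<n. a * q ^ i = 1)"
  by (auto simp: qpoch_def)

lemma qpoch_nonzero_mono: "qpoch a q n \<noteq> 0 \<Longrightarrow> m \<le> n \<Longrightarrow> qpoch a q m \<noteq> 0"
  by (auto simp: qpoch_eq_0_iff)

lemma qpoch_add_divide:
  "qpoch a q m \<noteq> 0 \<Longrightarrow> qpoch a q (m + n) / qpoch a q m = qpoch (a * q ^ m) q n"
  by (simp add: qpoch_add)

lemma qpoch_inverse_base:
  assumes "q \<noteq> 0"
  shows "qpoch a (inverse q) n = qpoch (a * q * inverse q ^ n) q n"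
proof (induction n)
  case (Suc n)
  have "qpoch (a * q * inverse q ^ Suc n) q (Suc n)
      = (1 - a * inverse q ^ n) * qpoch (a * q * inverse q ^ n) q n"
    unfolding qpoch_Suc_left using assms by (simp add: field_simps)
  then show ?case
    using Suc.IH by (simp add: qpoch_Suc)
qed simp

lemma qpoch_inverse_power:
  fixes q :: complex
  assumes "q \<noteq> 0" and "j \<le> l"
  shows "qpoch (inverse q ^ l) q j * q ^ (j * l) * qpoch q q (l - j) = (\<Prod>i<j. - (q ^ i)) * qpoch q q l"
  using assms(2)
proof (induction j)
  case (Suc j)
  then have "l - j = Suc (l - Suc j)"
    by simp
  then have qpoch_diff: "qpoch q q (l - j) = qpoch q q (l - Suc j) * (1 - q ^ (l - j))"
    by (simp add: qpoch_Suc)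
  have "q ^ l = q ^ j * q ^ (l - j)"
    using Suc.prems by (simp flip: power_add)
  then have factor: "(1 - inverse q ^ l * q ^ j) * q ^ l = - (q ^ j) * (1 - q ^ (l - j))"
    using assms(1) by (simp add: power_inverse field_simps)
  have "qpoch (inverse q ^ l) q (Suc j) * q ^ (Suc j * l) * qpoch q q (l - Suc j)
      = qpoch (inverse q ^ l) q j * q ^ (j * l) * ((1 - inverse q ^ l * q ^ j) * q ^ l) * qpoch q q (l - Suc j)"
    by (simp add: qpoch_Suc power_add mult_ac)
  also have "\<dots> = - (q ^ j) * (qpoch (inverse q ^ l) q j * q ^ (j * l) * qpoch q q (l - j))"
    unfolding factor qpoch_diff by (simp add: mult_ac)
  also have "\<dots> = (\<Prod>i<Suc j. - (q ^ i)) * qpoch q q l"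
    using Suc by (simp add: mult_ac)
  finally show ?case .
qed simp

lemma inverse_power_diff:
  fixes q :: "'a::field"
  assumes "q \<noteq> 0" and "j \<le> m"
  shows "inverse q ^ (m - j) = inverse q ^ m * q ^ j"
  using assms by (simp add: power_diff power_inverse field_simps)

lemma power_int_minus_nat: "(q::'a::field) powi (- int n) = inverse q ^ n"
  by (simp add: power_int_minus power_inverse)

lemma power_int_diff_nat: "(q::'a::field) \<noteq> 0 \<Longrightarrow> q powi (int a - int b) = q ^ a * inverse q ^ b"
  by (simp add: power_int_diff power_inverse divide_inverse)

lemma power_int_1_minus_nat: "(q::'a::field) \<noteq> 0 \<Longrightarrow> q powi (1 - int n) = q * inverse q ^ n"
  using power_int_diff_nat[of q 1 n] by simp

section \<open>Expansion by a Pascal-type recurrence\<close>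

definition lagrange_weight :: "'a::field \<Rightarrow> 'a \<Rightarrow> 'a \<Rightarrow> 'a" where
  "lagrange_weight u v w = (w - v) / (u - v)"

lemma lagrange_weight_eq_ratio:
  fixes u v w :: "'a::field"
  assumes "v \<noteq> 0"
  shows "(1 - w / v) / (1 - u / v) = lagrange_weight u v w"
proof -
  have "1 - w / v = (v - w) / v" "1 - u / v = (v - u) / v"
    using assms by (simp_all add: field_simps)
  then have "(1 - w / v) / (1 - u / v) = (v - w) / (v - u)"
    using assms by simp
  then show ?thesis
    unfolding lagrange_weight_def by (metis minus_diff_eq minus_divide_divide)
qed

lemma one_minus_lagrange_split:
  fixes u v w x :: "'a::field"
  assumes "u \<noteq> v"
  shows "1 - w * x = lagrange_weight u v w * (1 - u * x) + lagrange_weight v u w * (1 - v * x)"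
proof -
  have "lagrange_weight v u w = (u - w) / (u - v)"
    unfolding lagrange_weight_def by (metis minus_diff_eq minus_divide_divide)
  then have "lagrange_weight u v w * (1 - u * x) + lagrange_weight v u w * (1 - v * x)
      = ((w - v) * (1 - u * x) + (u - w) * (1 - v * x)) / (u - v)"
    unfolding lagrange_weight_def by (simp add: add_divide_distrib)
  also have "(w - v) * (1 - u * x) + (u - w) * (1 - v * x) = (1 - w * x) * (u - v)"
    by (simp add: algebra_simps)
  finally show ?thesis
    using assms by simp
qed

lemma qpoch_basis_mult_factor:
  assumes "j \<le> m" and "h * r ^ (m - j) \<noteq> f * s ^ j"
  shows "qpoch (f * x) s j * qpoch (h * x) r (m - j) * (1 - w * x)
    = lagrange_weight (h * r ^ (m - j)) (f * s ^ j) w * (qpoch (f * x) s j * qpoch (h * x) r (Suc m - j))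
    + lagrange_weight (f * s ^ j) (h * r ^ (m - j)) w * (qpoch (f * x) s (Suc j) * qpoch (h * x) r (Suc m - Suc j))"
proof -
  define P where "P = qpoch (f * x) s j * qpoch (h * x) r (m - j)"
  define \<alpha> where "\<alpha> = lagrange_weight (h * r ^ (m - j)) (f * s ^ j) w"
  define \<beta> where "\<beta> = lagrange_weight (f * s ^ j) (h * r ^ (m - j)) w"
  have "1 - w * x = \<alpha> * (1 - h * r ^ (m - j) * x) + \<beta> * (1 - f * s ^ j * x)"
    unfolding \<alpha>_def \<beta>_def using assms(2) by (intro one_minus_lagrange_split)
  then have "P * (1 - w * x) = \<alpha> * (P * (1 - h * r ^ (m - j) * x)) + \<beta> * (P * (1 - f * s ^ j * x))"
    by (metis (no_types, lifting) distrib_left mult.left_commute)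
  moreover have "qpoch (f * x) s j * qpoch (h * x) r (Suc m - j) = P * (1 - h * r ^ (m - j) * x)"
    unfolding P_def using assms(1) by (simp add: Suc_diff_le qpoch_Suc mult_ac)
  moreover have "qpoch (f * x) s (Suc j) * qpoch (h * x) r (Suc m - Suc j) = P * (1 - f * s ^ j * x)"
    unfolding P_def by (simp add: qpoch_Suc mult_ac)
  ultimately show ?thesis
    unfolding P_def[symmetric] \<alpha>_def[symmetric] \<beta>_def[symmetric] by (simp only:)
qed

lemma sum_atMost_Suc_pascal:
  fixes a b c :: "nat \<Rightarrow> 'a::comm_semiring_1"
  assumes "c 0 = a 0" and "\<And>j. j < m \<Longrightarrow> c (Suc j) = a (Suc j) + b j" and "c (Suc m) = b m"
  shows "(\<Sum>j\<le>m. a j * B j) + (\<Sum>j\<le>m. b j * B (Suc j)) = (\<Sum>j\<le>Suc m. c j * B j)"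
proof -
  have c: "c j = (if j \<le> m then a j else 0) + (if 0 < j then b (j - 1) else 0)"
    if "j \<le> Suc m" for j
    using assms that by (cases j) (auto simp: le_Suc_eq)
  have "(\<Sum>j\<le>m. b j * B (Suc j)) = (\<Sum>j\<le>Suc m. (if 0 < j then b (j - 1) else 0) * B j)"
    by (subst sum.atMost_Suc_shift) simp
  moreover have "(\<Sum>j\<le>m. a j * B j) = (\<Sum>j\<le>Suc m. (if j \<le> m then a j else 0) * B j)"
    by simp
  ultimately show ?thesis
    by (simp add: c distrib_right sum.distrib)
qed

lemma qpoch_expansion_by_recurrence:
  fixes K :: "nat \<Rightarrow> nat \<Rightarrow> complex"
  assumes "K 0 0 = 1"
    and distinct: "\<And>m j. m < n \<Longrightarrow> j \<le> m \<Longrightarrow> h * r ^ (m - j) \<noteq> f * s ^ j"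
    and first: "\<And>m. m < n \<Longrightarrow> K (Suc m) 0 = K m 0 * lagrange_weight (h * r ^ m) f (e * r ^ m)"
    and mid: "\<And>m j. m < n \<Longrightarrow> j < m \<Longrightarrow> K (Suc m) (Suc j) =
                K m (Suc j) * lagrange_weight (h * r ^ (m - Suc j)) (f * s ^ Suc j) (e * r ^ m)
              + K m j * lagrange_weight (f * s ^ j) (h * r ^ (m - j)) (e * r ^ m)"
    and last: "\<And>m. m < n \<Longrightarrow> K (Suc m) (Suc m) = K m m * lagrange_weight (f * s ^ m) h (e * r ^ m)"
  shows "qpoch (e * x) r n = (\<Sum>j\<le>n. K n j * qpoch (f * x) s j * qpoch (h * x) r (n - j))"
  using distinct first mid last
proof (induction n)
  case 0
  then show ?case
    using \<open>K 0 0 = 1\<close> by simp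
next
  case (Suc m)
  define B where "B j = qpoch (f * x) s j * qpoch (h * x) r (Suc m - j)" for j
  define \<alpha> where "\<alpha> j = lagrange_weight (h * r ^ (m - j)) (f * s ^ j) (e * r ^ m)" for j
  define \<beta> where "\<beta> j = lagrange_weight (f * s ^ j) (h * r ^ (m - j)) (e * r ^ m)" for j
  have step: "qpoch (f * x) s j * qpoch (h * x) r (m - j) * (1 - e * r ^ m * x) = \<alpha> j * B j + \<beta> j * B (Suc j)"
    if "j \<le> m" for j
    unfolding B_def \<alpha>_def \<beta>_def using that Suc.prems(1)[of m j] by (intro qpoch_basis_mult_factor) simp_all
  have "qpoch (e * x) r (Suc m)
      = (\<Sum>j\<le>m. K m j * (qpoch (f * x) s j * qpoch (h * x) r (m - j) * (1 - e * r ^ m * x)))"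
    using Suc.IH Suc.prems by (simp add: qpoch_Suc sum_distrib_left mult_ac)
  also have "\<dots> = (\<Sum>j\<le>m. K m j * (\<alpha> j * B j + \<beta> j * B (Suc j)))"
    by (intro sum.cong refl) (simp add: step)
  also have "\<dots> = (\<Sum>j\<le>m. (K m j * \<alpha> j) * B j) + (\<Sum>j\<le>m. (K m j * \<beta> j) * B (Suc j))"
    by (simp add: sum.distrib algebra_simps)
  also have "\<dots> = (\<Sum>j\<le>Suc m. K (Suc m) j * B j)"
    by (rule sum_atMost_Suc_pascal) (use Suc.prems in \<open>auto simp: \<alpha>_def \<beta>_def\<close>)
  finally show ?case
    unfolding B_def by (simp add: mult.assoc)
qed

section \<open>Expanding \<open>(e x; q\<^sup>-\<^sup>1)\<^sub>n\<close> in the basis \<open>(f x; q)\<^sub>j (h x; q\<^sup>-\<^sup>1)\<^sub>n\<^sub>-\<^sub>j\<close>\<close>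

definition inv_conn_coeff :: "complex \<Rightarrow> complex \<Rightarrow> complex \<Rightarrow> complex \<Rightarrow> nat \<Rightarrow> nat \<Rightarrow> complex" where
  "inv_conn_coeff q e f h n j =
     qpoch (e / f) (inverse q) n / qpoch (h / f) (inverse q) n
     * (qpoch (inverse q ^ n) q j * qpoch (h / e) q j / (qpoch q q j * qpoch (f / e) q j)) * q ^ j"

lemma inv_conn_coeff_Suc_0:
  assumes "f \<noteq> 0"
  shows "inv_conn_coeff q e f h (Suc n) 0
    = inv_conn_coeff q e f h n 0 * lagrange_weight (h * inverse q ^ n) f (e * inverse q ^ n)"
  using lagrange_weight_eq_ratio[OF assms, of "e * inverse q ^ n" "h * inverse q ^ n"]
  by (simp add: inv_conn_coeff_def qpoch_Suc times_divide_times_eq[symmetric])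

lemma inv_conn_coeff_Suc_right:
  "inv_conn_coeff q e f h n (Suc j) = inv_conn_coeff q e f h n j
     * ((1 - inverse q ^ n * q ^ j) * (1 - h / e * q ^ j) / ((1 - q * q ^ j) * (1 - f / e * q ^ j)) * q)"
  by (simp add: inv_conn_coeff_def qpoch_Suc mult_ac)

lemma inv_conn_coeff_Suc_Suc:
  assumes "q \<noteq> 0"
  shows "inv_conn_coeff q e f h (Suc n) (Suc j) = inv_conn_coeff q e f h n j
     * ((1 - e / f * inverse q ^ n) / (1 - h / f * inverse q ^ n)
        * ((1 - inverse q ^ n / q) * (1 - h / e * q ^ j) / ((1 - q * q ^ j) * (1 - f / e * q ^ j)) * q))"
proof -
  have "qpoch (inverse q ^ Suc n) q (Suc j) = (1 - inverse q ^ n / q) * qpoch (inverse q ^ n) q j"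
    unfolding qpoch_Suc_left using assms by (simp add: field_simps)
  then show ?thesis
    by (simp add: inv_conn_coeff_def qpoch_Suc mult_ac)
qed

lemma inv_conn_step_identity:
  fixes q P I e f h :: complex
  assumes "q \<noteq> 0" "I \<noteq> 0" "e \<noteq> 0" "f \<noteq> 0" "h * P \<noteq> f" "q * I \<noteq> 1" "f * I \<noteq> e"
  shows "(1 - e / f * P) / (1 - h / f * P) * ((1 - P / q) * (1 - h / e * I) / ((1 - q * I) * (1 - f / e * I)) * q)
    = (1 - P * I) * (1 - h / e * I) / ((1 - q * I) * (1 - f / e * I)) * q
        * lagrange_weight (h * (P * q * I)) (f * (q * I)) (e * P)
      + lagrange_weight (f * I) (h * (P * I)) (e * P)"
proof -
  have nz: "f - h * P \<noteq> 0" "1 - q * I \<noteq> 0" "e - f * I \<noteq> 0"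
    using assms by (auto simp: algebra_simps)
  define D where "D = (f - h * P) * (1 - q * I) * (e - f * I) * I"
  have "(1 - e / f * P) / (1 - h / f * P) * ((1 - P / q) * (1 - h / e * I) / ((1 - q * I) * (1 - f / e * I)) * q)
      = I * (f - e * P) * (q - P) * (e - h * I) / D"
    unfolding D_def using assms nz by (simp add: divide_simps)
  also have "I * (f - e * P) * (q - P) * (e - h * I)
      = P * (e - h * I) * (1 - q * I) * (e - f * I) - (1 - P * I) * (e - h * I) * (e * P - f * q * I)"
    by (simp add: algebra_simps)
  also have "\<dots> / D = (1 - P * I) * (1 - h / e * I) / ((1 - q * I) * (1 - f / e * I)) * q
        * lagrange_weight (h * (P * q * I)) (f * (q * I)) (e * P)
      + lagrange_weight (f * I) (h * (P * I)) (e * P)"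
  proof -
    have "h * (P * q * I) - f * (q * I) = - (q * I * (f - h * P))" "f * I - h * (P * I) = I * (f - h * P)"
      by (simp_all add: algebra_simps)
    then show ?thesis
      unfolding D_def lagrange_weight_def using assms nz by (simp add: divide_simps) (simp add: algebra_simps)
  qed
  finally show ?thesis .
qed

lemma inv_conn_last_step_identity:
  fixes q P I e f h :: complex
  assumes "q \<noteq> 0" "I \<noteq> 0" "e \<noteq> 0" "f \<noteq> 0" "P * I = 1" "q * I \<noteq> 1" "f * I \<noteq> e" "f * I \<noteq> h"
  shows "(1 - e / f * P) / (1 - h / f * P) * ((1 - P / q) * (1 - h / e * I) / ((1 - q * I) * (1 - f / e * I)) * q)
    = lagrange_weight (f * I) h (e * P)"
proof -
  have P: "P = 1 / I"
    using assms by (simp add: field_simps)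
  have nz: "f * I - h \<noteq> 0" "1 - q * I \<noteq> 0" "e - f * I \<noteq> 0" "q * I - 1 \<noteq> 0"
    using assms by (auto simp: algebra_simps)
  have "(1 - e / f * P) / (1 - h / f * P) * ((1 - P / q) * (1 - h / e * I) / ((1 - q * I) * (1 - f / e * I)) * q)
      = (e - h * I) / (I * (f * I - h))"
    unfolding P using assms nz by (simp add: divide_simps) (simp add: algebra_simps)
  also have "\<dots> = lagrange_weight (f * I) h (e * P)"
    unfolding P lagrange_weight_def using assms nz by (simp add: divide_simps)
  finally show ?thesis .
qed

lemma inv_conn_coeff_Suc_Suc_recurrence:
  assumes q: "q \<noteq> 0" and e: "e \<noteq> 0" and f: "f \<noteq> 0" and "j < m"
    and "h * inverse q ^ m \<noteq> f" and "q * q ^ j \<noteq> 1" and "f * q ^ j \<noteq> e"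
  shows "inv_conn_coeff q e f h (Suc m) (Suc j)
    = inv_conn_coeff q e f h m (Suc j) * lagrange_weight (h * inverse q ^ (m - Suc j)) (f * q ^ Suc j) (e * inverse q ^ m)
    + inv_conn_coeff q e f h m j * lagrange_weight (f * q ^ j) (h * inverse q ^ (m - j)) (e * inverse q ^ m)"
proof -
  define P where "P = inverse q ^ m"
  define I where "I = q ^ j"
  define K where "K = inv_conn_coeff q e f h"
  have "K (Suc m) (Suc j) = K m j * ((1 - e / f * P) / (1 - h / f * P)
      * ((1 - P / q) * (1 - h / e * I) / ((1 - q * I) * (1 - f / e * I)) * q))"
    unfolding K_def P_def I_def using q by (rule inv_conn_coeff_Suc_Suc)
  also have "\<dots> = K m j * ((1 - P * I) * (1 - h / e * I) / ((1 - q * I) * (1 - f / e * I)) * q)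
        * lagrange_weight (h * (P * q * I)) (f * (q * I)) (e * P)
      + K m j * lagrange_weight (f * I) (h * (P * I)) (e * P)"
    unfolding P_def I_def using inv_conn_step_identity[OF q _ e f] assms by (simp add: distrib_left mult.assoc)
  also have "K m j * ((1 - P * I) * (1 - h / e * I) / ((1 - q * I) * (1 - f / e * I)) * q) = K m (Suc j)"
    unfolding K_def P_def I_def by (rule inv_conn_coeff_Suc_right[symmetric])
  finally have "K (Suc m) (Suc j)
      = K m (Suc j) * lagrange_weight (h * (P * q * I)) (f * (q * I)) (e * P)
      + K m j * lagrange_weight (f * I) (h * (P * I)) (e * P)" .
  moreover have "P * q * I = inverse q ^ (m - Suc j)" "P * I = inverse q ^ (m - j)" "q * I = q ^ Suc j"
    unfolding P_def I_def using q \<open>j < m\<close> by (simp_all add: inverse_power_diff mult.assoc)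
  ultimately show ?thesis
    unfolding K_def P_def I_def by (simp only:)
qed

lemma inv_conn_coeff_diagonal_recurrence:
  assumes q: "q \<noteq> 0" and e: "e \<noteq> 0" and f: "f \<noteq> 0"
    and "q * q ^ m \<noteq> 1" and "f * q ^ m \<noteq> e" and "f * q ^ m \<noteq> h"
  shows "inv_conn_coeff q e f h (Suc m) (Suc m) = inv_conn_coeff q e f h m m * lagrange_weight (f * q ^ m) h (e * inverse q ^ m)"
proof -
  have "inverse q ^ m * q ^ m = 1"
    using q by (simp add: power_inverse)
  then show ?thesis
    using inv_conn_last_step_identity[where P = "inverse q ^ m" and I = "q ^ m"] assms
    by (simp add: inv_conn_coeff_Suc_Suc)
qed

lemma qpoch_inverse_base_expansion:
  fixes q e f h x :: complex
  assumes q: "q \<noteq> 0" and e: "e \<noteq> 0" and f: "f \<noteq> 0"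
    and qq: "qpoch q q n \<noteq> 0" and fe: "qpoch (f / e) q n \<noteq> 0"
    and hf: "\<And>i. i < n \<Longrightarrow> h \<noteq> f * q ^ i"
  shows "qpoch (e * x) (inverse q) n
    = (\<Sum>j\<le>n. inv_conn_coeff q e f h n j * qpoch (f * x) q j * qpoch (h * x) (inverse q) (n - j))"
proof (rule qpoch_expansion_by_recurrence)
  have hP: "h * inverse q ^ m \<noteq> f" if "m < n" for m
    using hf[OF that] q by (auto simp: field_simps)
  have qI: "q * q ^ j \<noteq> 1" if "j < n" for j
    using qq that by (auto simp: qpoch_eq_0_iff)
  have fI: "f * q ^ j \<noteq> e" if "j < n" for j
    using fe e that by (auto simp: qpoch_eq_0_iff field_simps)
  show "inv_conn_coeff q e f h 0 0 = 1"
    by (simp add: inv_conn_coeff_def)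
  show "h * inverse q ^ (m - j) \<noteq> f * q ^ j" if "m < n" "j \<le> m" for m j
    using hP[OF that(1)] q that(2) by (simp add: inverse_power_diff)
  show "inv_conn_coeff q e f h (Suc m) 0
      = inv_conn_coeff q e f h m 0 * lagrange_weight (h * inverse q ^ m) f (e * inverse q ^ m)" for m
    using f by (rule inv_conn_coeff_Suc_0)
  show "inv_conn_coeff q e f h (Suc m) (Suc j)
      = inv_conn_coeff q e f h m (Suc j) * lagrange_weight (h * inverse q ^ (m - Suc j)) (f * q ^ Suc j) (e * inverse q ^ m)
      + inv_conn_coeff q e f h m j * lagrange_weight (f * q ^ j) (h * inverse q ^ (m - j)) (e * inverse q ^ m)"
    if "m < n" "j < m" for m j
    using that by (intro inv_conn_coeff_Suc_Suc_recurrence[OF q e f] hP qI fI) simp_all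
  show "inv_conn_coeff q e f h (Suc m) (Suc m)
      = inv_conn_coeff q e f h m m * lagrange_weight (f * q ^ m) h (e * inverse q ^ m)" if "m < n" for m
    using hf[OF that] by (intro inv_conn_coeff_diagonal_recurrence[OF q e f] qI fI that) auto
qed

section \<open>Expanding \<open>(e x; q)\<^sub>n\<close> in the basis \<open>(f x; q)\<^sub>l (g x; q)\<^sub>n\<^sub>-\<^sub>l\<close>\<close>

text \<open>
  The coefficient of \<open>(f x; q)\<^sub>l (g x; q)\<^sub>r\<close> is indexed by both lengths, which makes the
  symmetry \<open>f \<leftrightarrow> g\<close>, \<open>l \<leftrightarrow> r\<close> visible.
\<close>
definition conn_coeff :: "complex \<Rightarrow> complex \<Rightarrow> complex \<Rightarrow> complex \<Rightarrow> nat \<Rightarrow> nat \<Rightarrow> complex" where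
  "conn_coeff q e f g l r =
     inverse q ^ (l * r) * qbinom q (l + r) l
     * (qpoch (e / g) q l * qpoch (e / f) q r
        / (qpoch (inverse q ^ r * f / g) q l * qpoch (inverse q ^ l * g / f) q r))"

lemma conn_coeff_commute: "conn_coeff q e f g l r = conn_coeff q e g f r l"
  by (simp add: conn_coeff_def qbinom_def mult.commute mult.left_commute add.commute)

lemma conn_coeff_0_0 [simp]: "conn_coeff q e f g 0 0 = 1"
  by (simp add: conn_coeff_def qbinom_def)

lemma conn_coeff_Suc_0:
  assumes "g \<noteq> 0" and "qpoch q q (Suc l) \<noteq> 0"
  shows "conn_coeff q e f g (Suc l) 0 = conn_coeff q e f g l 0 * lagrange_weight (f * q ^ l) g (e * q ^ l)"
proof -
  have value_0: "conn_coeff q e f g n 0 = qpoch (e / g) q n / qpoch (f / g) q n" if "qpoch q q n \<noteq> 0" for n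
    using that by (simp add: conn_coeff_def qbinom_def)
  have "qpoch q q l \<noteq> 0"
    using assms(2) by (rule qpoch_nonzero_mono) simp
  then show ?thesis
    using value_0[OF assms(2)] value_0 lagrange_weight_eq_ratio[OF assms(1), of "e * q ^ l" "f * q ^ l"]
    by (simp add: qpoch_Suc times_divide_times_eq[symmetric])
qed

text \<open>The common factor of \<open>conn_coeff\<close> at \<open>(i + 1, k + 1)\<close>, \<open>(i + 1, k)\<close> and \<open>(i, k + 1)\<close>.\<close>
definition conn_core :: "complex \<Rightarrow> complex \<Rightarrow> complex \<Rightarrow> complex \<Rightarrow> nat \<Rightarrow> nat \<Rightarrow> complex" where
  "conn_core q e f g i k =
     inverse q ^ (i * k) * (qpoch q q (Suc (i + k)) / (qpoch q q i * qpoch q q k))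
     * (qpoch (e / g) q i * qpoch (e / f) q k
        / (qpoch (inverse q ^ Suc k * f / g) q i * qpoch (inverse q ^ Suc i * g / f) q k))"

lemma conn_core_commute: "conn_core q e f g i k = conn_core q e g f k i"
  by (simp add: conn_core_def mult.commute mult.left_commute add.commute)

lemma conn_coeff_Suc_Suc:
  "conn_coeff q e f g (Suc i) (Suc k) = conn_core q e f g i k
     * (inverse q ^ Suc (i + k) * (1 - q * q ^ Suc (i + k)) / ((1 - q * q ^ i) * (1 - q * q ^ k))
        * ((1 - e / g * q ^ i) * (1 - e / f * q ^ k)
           / ((1 - inverse q ^ Suc k * f / g * q ^ i) * (1 - inverse q ^ Suc i * g / f * q ^ k))))"
proof -
  have "qbinom q (Suc i + Suc k) (Suc i) = qpoch q q (Suc (i + k)) / (qpoch q q i * qpoch q q k)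
      * (1 - q * q ^ Suc (i + k)) / ((1 - q * q ^ i) * (1 - q * q ^ k))"
    by (simp add: qbinom_def qpoch_Suc)
  then show ?thesis
    unfolding conn_coeff_def conn_core_def by (simp add: qpoch_Suc power_add divide_inverse mult_ac)
qed

lemma conn_coeff_Suc_left:
  assumes "q \<noteq> 0" and "f \<noteq> g * q ^ Suc k"
  defines "z \<equiv> inverse q ^ Suc k * f / g"
  shows "conn_coeff q e f g (Suc i) k = conn_core q e f g i k
     * (inverse q ^ k * (1 - e / g * q ^ i) * (1 - z) / ((1 - q * q ^ i) * (1 - z * q ^ i) * (1 - z * (q * q ^ i))))"
proof -
  define X where "X = qpoch z q i * (1 - z * q ^ i) * (1 - z * (q * q ^ i))"
  have "z * q = inverse q ^ k * f / g"
    unfolding z_def using assms(1) by (simp add: field_simps)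
  then have "(1 - z) * qpoch (inverse q ^ k * f / g) q (Suc i) = X"
    unfolding X_def using qpoch_Suc_left[of z q "Suc i"] by (simp add: qpoch_Suc mult_ac)
  moreover have "1 - z \<noteq> 0"
    unfolding z_def using assms by (auto simp: field_simps)
  ultimately have "qpoch (inverse q ^ k * f / g) q (Suc i) = X / (1 - z)"
    by (simp add: field_simps)
  moreover have "qbinom q (Suc i + k) (Suc i) = qpoch q q (Suc (i + k)) / (qpoch q q i * qpoch q q k) / (1 - q * q ^ i)"
    by (simp add: qbinom_def qpoch_Suc)
  ultimately show ?thesis
    unfolding conn_coeff_def conn_core_def X_def z_def
    by (simp add: qpoch_Suc power_add divide_inverse mult_ac)
qed

lemma conn_coeff_Suc_right:
  assumes "q \<noteq> 0" and "g \<noteq> f * q ^ Suc i"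
  defines "w \<equiv> inverse q ^ Suc i * g / f"
  shows "conn_coeff q e f g i (Suc k) = conn_core q e f g i k
     * (inverse q ^ i * (1 - e / f * q ^ k) * (1 - w) / ((1 - q * q ^ k) * (1 - w * q ^ k) * (1 - w * (q * q ^ k))))"
  using conn_coeff_Suc_left[OF assms(1,2), of e k] unfolding w_def
  by (simp add: conn_coeff_commute[of q e f g i] conn_core_commute[of q e f g])

lemma conn_step_identity:
  fixes q I K e f g :: complex
  assumes nz: "q \<noteq> 0" "I \<noteq> 0" "K \<noteq> 0" "f \<noteq> 0" "g \<noteq> 0" "q * I \<noteq> 1" "q * K \<noteq> 1"
    and distinct: "f * I \<noteq> g * K" "f * I \<noteq> g * (q * K)" "f * (q * I) \<noteq> g * K"
  defines "z \<equiv> f / (q * K * g)" and "w \<equiv> g / (q * I * f)"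
  shows "1 / (q * I * K) * (1 - q * (q * I * K)) / ((1 - q * I) * (1 - q * K))
      * ((1 - e / g * I) * (1 - e / f * K) / ((1 - z * I) * (1 - w * K)))
    = 1 / K * (1 - e / g * I) * (1 - z) / ((1 - q * I) * (1 - z * I) * (1 - z * (q * I)))
        * lagrange_weight (g * K) (f * (q * I)) (e * (q * I * K))
      + 1 / I * (1 - e / f * K) * (1 - w) / ((1 - q * K) * (1 - w * K) * (1 - w * (q * K)))
        * lagrange_weight (f * I) (g * (q * K)) (e * (q * I * K))"
proof -
  define A where "A = f * I - g * K"
  define B where "B = q * K * g - f * I"
  define C where "C = q * I * f - g * K"
  have nz': "A \<noteq> 0" "B \<noteq> 0" "C \<noteq> 0" "1 - q * I \<noteq> 0" "1 - q * K \<noteq> 0"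
    unfolding A_def B_def C_def using nz distinct by (auto simp: algebra_simps)
  have zw: "1 - z * I = B / (q * K * g)" "1 - z * (q * I) = - A / (K * g)"
    "1 - w * K = C / (q * I * f)" "1 - w * (q * K) = A / (I * f)"
    "1 - z = (q * K * g - f) / (q * K * g)" "1 - w = (q * I * f - g) / (q * I * f)"
    unfolding z_def w_def A_def B_def C_def using nz by (simp_all add: field_simps)
  have weights: "lagrange_weight (g * K) (f * (q * I)) (e * (q * I * K)) = - (q * I * (e * K - f) / C)"
    "lagrange_weight (f * I) (g * (q * K)) (e * (q * I * K)) = - (q * K * (e * I - g) / B)"
    unfolding lagrange_weight_def B_def C_def by (simp_all add: algebra_simps minus_divide_right)
  have e_frac: "1 - e / g * I = (g - e * I) / g" "1 - e / f * K = (f - e * K) / f"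
    using nz by (simp_all add: field_simps)
  show ?thesis
    unfolding zw weights e_frac using nz nz'
    by (simp add: divide_simps) (simp add: A_def B_def C_def algebra_simps)
qed

lemma conn_coeff_Suc_Suc_recurrence:
  assumes q: "q \<noteq> 0" and f: "f \<noteq> 0" and g: "g \<noteq> 0" and "q * q ^ j \<noteq> 1" and "q * q ^ k \<noteq> 1"
    and distinct: "\<And>s t. s + t \<le> Suc (j + k) \<Longrightarrow> f * q ^ s \<noteq> g * q ^ t"
  shows "conn_coeff q e f g (Suc j) (Suc k)
    = conn_coeff q e f g (Suc j) k * lagrange_weight (g * q ^ k) (f * q ^ Suc j) (e * q ^ Suc (j + k))
    + conn_coeff q e f g j (Suc k) * lagrange_weight (f * q ^ j) (g * q ^ Suc k) (e * q ^ Suc (j + k))"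
proof -
  define I where "I = q ^ j"
  define K where "K = q ^ k"
  define z where "z = f / (q * K * g)"
  define w where "w = g / (q * I * f)"
  define C where "C = conn_core q e f g j k"
  have powers: "q ^ Suc (j + k) = q * I * K" "inverse q ^ Suc (j + k) = 1 / (q * I * K)"
    "inverse q ^ j = 1 / I" "inverse q ^ k = 1 / K" "q ^ Suc j = q * I" "q ^ Suc k = q * K"
    "inverse q ^ Suc k * f / g = z" "inverse q ^ Suc j * g / f = w"
    unfolding I_def K_def z_def w_def by (simp_all add: power_add power_inverse field_simps)
  have "conn_coeff q e f g (Suc j) (Suc k) = C * (1 / (q * I * K) * (1 - q * (q * I * K)) / ((1 - q * I) * (1 - q * K))
      * ((1 - e / g * I) * (1 - e / f * K) / ((1 - z * I) * (1 - w * K))))"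
    using conn_coeff_Suc_Suc[of q e f g j k] unfolding C_def powers I_def[symmetric] K_def[symmetric] .
  also have "\<dots> = C * (1 / K * (1 - e / g * I) * (1 - z) / ((1 - q * I) * (1 - z * I) * (1 - z * (q * I))))
        * lagrange_weight (g * K) (f * (q * I)) (e * (q * I * K))
      + C * (1 / I * (1 - e / f * K) * (1 - w) / ((1 - q * K) * (1 - w * K) * (1 - w * (q * K))))
        * lagrange_weight (f * I) (g * (q * K)) (e * (q * I * K))"
    unfolding z_def w_def using assms distinct[of j k] distinct[of j "Suc k"] distinct[of "Suc j" k]
    by (subst conn_step_identity) (simp_all add: I_def K_def mult_ac distrib_left)
  also have "C * (1 / K * (1 - e / g * I) * (1 - z) / ((1 - q * I) * (1 - z * I) * (1 - z * (q * I))))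
      = conn_coeff q e f g (Suc j) k"
    using conn_coeff_Suc_left[OF q, of f g k e j] distinct[of 0 "Suc k"]
    unfolding C_def powers I_def[symmetric] K_def[symmetric] by simp
  also have "C * (1 / I * (1 - e / f * K) * (1 - w) / ((1 - q * K) * (1 - w * K) * (1 - w * (q * K))))
      = conn_coeff q e f g j (Suc k)"
    using conn_coeff_Suc_right[OF q, of g f j e k] distinct[of "Suc j" 0]
    unfolding C_def powers I_def[symmetric] K_def[symmetric] by (simp add: eq_commute[of g])
  finally show ?thesis
    unfolding powers I_def K_def .
qed

lemma qpoch_expansion:
  fixes q e f g x :: complex
  assumes q: "q \<noteq> 0" and f: "f \<noteq> 0" and g: "g \<noteq> 0" and qq: "qpoch q q n \<noteq> 0"
    and distinct: "\<And>s t. s + t < n \<Longrightarrow> f * q ^ s \<noteq> g * q ^ t"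
  shows "qpoch (e * x) q n = (\<Sum>l\<le>n. conn_coeff q e f g l (n - l) * qpoch (f * x) q l * qpoch (g * x) q (n - l))"
proof (rule qpoch_expansion_by_recurrence[where K = "\<lambda>n l. conn_coeff q e f g l (n - l)"])
  have qq': "qpoch q q (Suc m) \<noteq> 0" if "m < n" for m
    using qq by (rule qpoch_nonzero_mono) (use that in simp)
  show "conn_coeff q e f g 0 (0 - 0) = 1"
    by simp
  show "g * q ^ (m - j) \<noteq> f * q ^ j" if "m < n" "j \<le> m" for m j
    using distinct[of j "m - j"] that by auto
  show "conn_coeff q e f g 0 (Suc m - 0) = conn_coeff q e f g 0 (m - 0) * lagrange_weight (g * q ^ m) f (e * q ^ m)"
    if "m < n" for m
    using conn_coeff_Suc_0[OF f qq'[OF that], of e g] by (simp add: conn_coeff_commute[of q e f g 0])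
  show "conn_coeff q e f g (Suc m) (Suc m - Suc m) = conn_coeff q e f g m (m - m) * lagrange_weight (f * q ^ m) g (e * q ^ m)"
    if "m < n" for m
    using conn_coeff_Suc_0[OF g qq'[OF that]] by simp
  show "conn_coeff q e f g (Suc j) (Suc m - Suc j)
      = conn_coeff q e f g (Suc j) (m - Suc j) * lagrange_weight (g * q ^ (m - Suc j)) (f * q ^ Suc j) (e * q ^ m)
      + conn_coeff q e f g j (m - j) * lagrange_weight (f * q ^ j) (g * q ^ (m - j)) (e * q ^ m)"
    if "m < n" "j < m" for m j
  proof -
    obtain k where m: "m = Suc (j + k)"
      using \<open>j < m\<close> less_imp_Suc_add by blast
    have "q * q ^ i \<noteq> 1" if "i < n" for i
      using qq that by (auto simp: qpoch_eq_0_iff)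
    then show ?thesis
      using conn_coeff_Suc_Suc_recurrence[OF q f g, of j k e] distinct \<open>m < n\<close> unfolding m
      by (simp add: Suc_diff_le)
  qed
qed

section \<open>The connection coefficients of the theorem\<close>

lemma qbinom_shift_by_qpoch_ratio:
  fixes q :: complex
  assumes q: "q \<noteq> 0" and qN: "qpoch q q N \<noteq> 0" and "j \<le> l" and "l \<le> N"
  shows "q powi (int l * (int l - int N)) * qbinom q N l * qpoch (q powi (- int l)) q j / qpoch (q powi (- int N)) q j
    = inverse q ^ ((l - j) * (N - l)) * qbinom q (N - j) (l - j)"
proof -
  define \<sigma> where "\<sigma> = (\<Prod>i<j. - (q ^ i))"
  define P where "P = q powi (int l * (int l - int N))"
  have nz: "\<sigma> \<noteq> 0" "qpoch q q l \<noteq> 0" "qpoch q q (N - l) \<noteq> 0" "qpoch q q (l - j) \<noteq> 0"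
    "qpoch q q (N - j) \<noteq> 0" "q ^ (j * l) \<noteq> 0" "q ^ (j * N) \<noteq> 0"
    using q qN assms(3,4) qpoch_nonzero_mono[OF qN] by (auto simp: \<sigma>_def)
  have qpoch_values: "qpoch (inverse q ^ l) q j = \<sigma> * qpoch q q l / (q ^ (j * l) * qpoch q q (l - j))"
    "qpoch (inverse q ^ N) q j = \<sigma> * qpoch q q N / (q ^ (j * N) * qpoch q q (N - j))"
    using qpoch_inverse_power[OF q, of j l] qpoch_inverse_power[OF q, of j N] assms nz
    unfolding \<sigma>_def by (simp_all add: field_simps)
  have "P * qbinom q N l * qpoch (q powi (- int l)) q j / qpoch (q powi (- int N)) q j
      = P * q ^ (j * N) / q ^ (j * l) * (qpoch q q (N - j) / (qpoch q q (l - j) * qpoch q q (N - l)))"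
    unfolding power_int_minus_nat qbinom_def qpoch_values using qN nz by (simp add: field_simps)
  also have "P * q ^ (j * N) / q ^ (j * l) = inverse q ^ ((l - j) * (N - l))"
  proof -
    have "int ((l - j) * (N - l)) = (int l - int j) * (int N - int l)"
      using assms(3,4) by (simp add: of_nat_diff)
    then have "int l * (int l - int N) + int (j * N) = - int ((l - j) * (N - l)) + int (j * l)"
      by (simp add: algebra_simps)
    then have "P * q ^ (j * N) = inverse q ^ ((l - j) * (N - l)) * q ^ (j * l)"
      unfolding P_def using q by (metis power_int_add power_int_minus_nat power_int_of_nat)
    then show ?thesis
      using nz by (simp add: field_simps)
  qed
  also have "qpoch q q (N - j) / (qpoch q q (l - j) * qpoch q q (N - l)) = qbinom q (N - j) (l - j)"
    using assms(3) by (simp add: qbinom_def)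
  finally show ?thesis
    unfolding P_def .
qed

definition mixed_prefactor :: "complex \<Rightarrow> complex \<Rightarrow> complex \<Rightarrow> complex \<Rightarrow> complex \<Rightarrow> nat \<Rightarrow> nat \<Rightarrow> nat \<Rightarrow> complex" where
  "mixed_prefactor q a b c d N k l =
     q powi (int l * (int l - int N)) * qbinom q N l *
     (qpoch (q powi (1 - int N) * b / d) q l
      * qpoch (q powi (1 - int N) * b / c) q (N - l)
      * qpoch (q powi (1 - int k) * a / c) q k)
     / (qpoch (q powi (int l - int N) * c / d) q l
        * qpoch (q powi (- int l) * d / c) q (N - l)
        * qpoch (q powi (1 - int N) * b / c) q k)"

definition mixed_conn_coeff :: "complex \<Rightarrow> complex \<Rightarrow> complex \<Rightarrow> complex \<Rightarrow> complex \<Rightarrow> nat \<Rightarrow> nat \<Rightarrow> nat \<Rightarrow> complex" where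
  "mixed_conn_coeff q a b c d N k l =
     mixed_prefactor q a b c d N k l
     * phi43 k (q powi (- int k)) (q powi (- int l))
         (q powi (int k - int N) * b / a) (q powi (int l - int N) * c / d)
         (q powi (- int N)) (c / a) (q powi (1 - int N) * b / d) q q"

lemma inv_conn_coeff_as_powi:
  fixes q a b c :: complex
  assumes q: "q \<noteq> 0" and "k \<le> N"
  shows "inv_conn_coeff q a c (b * inverse q ^ (N - k)) k j
    = qpoch (q powi (1 - int k) * a / c) q k / qpoch (q powi (1 - int N) * b / c) q k
      * (qpoch (q powi (- int k)) q j * qpoch (q powi (int k - int N) * b / a) q j / (qpoch q q j * qpoch (c / a) q j))
      * q ^ j"
proof -
  have args: "a / c * q * inverse q ^ k = q powi (1 - int k) * a / c"
    "b * inverse q ^ (N - k) / c * q * inverse q ^ k = q powi (1 - int N) * b / c"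
    "b * inverse q ^ (N - k) / a = q powi (int k - int N) * b / a"
    using q power_add[of q k "N - k"] assms(2)
    by (simp_all add: power_int_1_minus_nat power_int_diff_nat field_simps)
  show ?thesis
    unfolding inv_conn_coeff_def qpoch_inverse_base[OF q] args power_int_minus_nat ..
qed

lemma conn_coeff_as_powi:
  fixes q b c d :: complex
  assumes q: "q \<noteq> 0" and "j \<le> l" and "l \<le> N"
  shows "conn_coeff q (b * q * inverse q ^ (N - j)) (c * q ^ j) d (l - j) (N - l)
    = inverse q ^ ((l - j) * (N - l)) * qbinom q (N - j) (l - j)
      * (qpoch (q powi (1 - int N) * b / d * q ^ j) q (l - j) * qpoch (q powi (1 - int N) * b / c) q (N - l)
         / (qpoch (q powi (int l - int N) * c / d * q ^ j) q (l - j) * qpoch (q powi (- int l) * d / c) q (N - l)))"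
proof -
  have "q ^ N = q ^ j * q ^ (N - j)" "q ^ (N - j) = q ^ (N - l) * q ^ (l - j)" "q ^ l = q ^ j * q ^ (l - j)"
    using assms(2,3) by (simp_all flip: power_add)
  then have args: "b * q * inverse q ^ (N - j) / d = q powi (1 - int N) * b / d * q ^ j"
    "b * q * inverse q ^ (N - j) / (c * q ^ j) = q powi (1 - int N) * b / c"
    "inverse q ^ (N - l) * (c * q ^ j) / d = q powi (int l - int N) * c / d * q ^ j"
    "inverse q ^ (l - j) * d / (c * q ^ j) = q powi (- int l) * d / c"
    "l - j + (N - l) = N - j"
    using q assms(2,3) by (simp_all add: power_int_1_minus_nat power_int_diff_nat power_int_minus_nat field_simps)
  show ?thesis
    unfolding conn_coeff_def args ..
qed

lemma mixed_term_factorization: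
  fixes q a b c d :: complex
  assumes q: "q \<noteq> 0" and qN: "qpoch q q N \<noteq> 0" and "k \<le> N" and "j \<le> l" and "l \<le> N"
    and bd: "qpoch (q powi (1 - int N) * b / d) q j \<noteq> 0"
    and cd: "qpoch (q powi (int l - int N) * c / d) q l \<noteq> 0"
  shows "mixed_prefactor q a b c d N k l
      * (qpoch (q powi (- int k)) q j * qpoch (q powi (- int l)) q j
           * qpoch (q powi (int k - int N) * b / a) q j * qpoch (q powi (int l - int N) * c / d) q j
         / (qpoch q q j * qpoch (q powi (- int N)) q j * qpoch (c / a) q j * qpoch (q powi (1 - int N) * b / d) q j)
         * q ^ j)
    = inv_conn_coeff q a c (b * inverse q ^ (N - k)) k j
      * conn_coeff q (b * q * inverse q ^ (N - j)) (c * q ^ j) d (l - j) (N - l)"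
proof -
  define M where "M = qpoch (q powi (1 - int k) * a / c) q k / qpoch (q powi (1 - int N) * b / c) q k
      * (qpoch (q powi (- int k)) q j * qpoch (q powi (int k - int N) * b / a) q j / (qpoch q q j * qpoch (c / a) q j))
      * q ^ j"
  define R where "R = qpoch (q powi (1 - int N) * b / c) q (N - l) / qpoch (q powi (- int l) * d / c) q (N - l)"
  have split_bd: "qpoch (q powi (1 - int N) * b / d) q l / qpoch (q powi (1 - int N) * b / d) q j
      = qpoch (q powi (1 - int N) * b / d * q ^ j) q (l - j)"
    using qpoch_add_divide[OF bd, of "l - j"] \<open>j \<le> l\<close> by simp
  have "qpoch (q powi (int l - int N) * c / d) q j \<noteq> 0"
    using cd \<open>j \<le> l\<close> by (rule qpoch_nonzero_mono)
  then have split_cd: "qpoch (q powi (int l - int N) * c / d) q j / qpoch (q powi (int l - int N) * c / d) q l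
      = inverse (qpoch (q powi (int l - int N) * c / d * q ^ j) q (l - j))"
    using qpoch_add_divide[of "q powi (int l - int N) * c / d" q j "l - j"] \<open>j \<le> l\<close>
    by (metis inverse_divide le_add_diff_inverse)
  have "mixed_prefactor q a b c d N k l
      * (qpoch (q powi (- int k)) q j * qpoch (q powi (- int l)) q j
           * qpoch (q powi (int k - int N) * b / a) q j * qpoch (q powi (int l - int N) * c / d) q j
         / (qpoch q q j * qpoch (q powi (- int N)) q j * qpoch (c / a) q j * qpoch (q powi (1 - int N) * b / d) q j)
         * q ^ j)
    = M * (q powi (int l * (int l - int N)) * qbinom q N l * qpoch (q powi (- int l)) q j / qpoch (q powi (- int N)) q j)
      * (qpoch (q powi (1 - int N) * b / d) q l / qpoch (q powi (1 - int N) * b / d) q j)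
      * (qpoch (q powi (int l - int N) * c / d) q j / qpoch (q powi (int l - int N) * c / d) q l) * R"
    unfolding mixed_prefactor_def M_def R_def by (simp add: divide_inverse mult_ac)
  also have "\<dots> = M * (inverse q ^ ((l - j) * (N - l)) * qbinom q (N - j) (l - j))
      * qpoch (q powi (1 - int N) * b / d * q ^ j) q (l - j)
      * inverse (qpoch (q powi (int l - int N) * c / d * q ^ j) q (l - j)) * R"
    unfolding qbinom_shift_by_qpoch_ratio[OF q qN \<open>j \<le> l\<close> \<open>l \<le> N\<close>] split_bd split_cd ..
  also have "\<dots> = inv_conn_coeff q a c (b * inverse q ^ (N - k)) k j
      * conn_coeff q (b * q * inverse q ^ (N - j)) (c * q ^ j) d (l - j) (N - l)"
    unfolding inv_conn_coeff_as_powi[OF q \<open>k \<le> N\<close>] conn_coeff_as_powi[OF q \<open>j \<le> l\<close> \<open>l \<le> N\<close>] M_def R_def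
    by (simp add: divide_inverse mult_ac)
  finally show ?thesis .
qed

lemma mixed_conn_coeff_sum_as_double_sum:
  fixes q a b c d x :: complex
  assumes q: "q \<noteq> 0" and qN: "qpoch q q N \<noteq> 0" and "k \<le> N"
    and cd: "\<And>l. l \<le> N \<Longrightarrow> qpoch (q powi (int l - int N) * c / d) q l \<noteq> 0"
    and bd: "qpoch (q powi (1 - int N) * b / d) q k \<noteq> 0"
  shows "(\<Sum>l\<le>N. mixed_conn_coeff q a b c d N k l * qpoch (c * x) q l * qpoch (d * x) q (N - l))
    = (\<Sum>j\<le>k. \<Sum>l = j..N. inv_conn_coeff q a c (b * inverse q ^ (N - k)) k j
        * conn_coeff q (b * q * inverse q ^ (N - j)) (c * q ^ j) d (l - j) (N - l)
        * qpoch (c * x) q l * qpoch (d * x) q (N - l))"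
proof -
  define T where "T l j =
      qpoch (q powi (- int k)) q j * qpoch (q powi (- int l)) q j
        * qpoch (q powi (int k - int N) * b / a) q j * qpoch (q powi (int l - int N) * c / d) q j
      / (qpoch q q j * qpoch (q powi (- int N)) q j * qpoch (c / a) q j * qpoch (q powi (1 - int N) * b / d) q j)
      * q ^ j" for l j
  define F where "F l j = mixed_prefactor q a b c d N k l * T l j * (qpoch (c * x) q l * qpoch (d * x) q (N - l))" for l j
  have vanish: "F l j = 0" if "l < j" for l j
  proof -
    have "qpoch (q powi (- int l)) q j = 0"
      unfolding qpoch_eq_0_iff using that q by (intro exI[of _ l]) (simp add: power_int_minus_nat power_inverse)
    then show ?thesis
      by (simp add: F_def T_def)
  qed
  have factor: "mixed_prefactor q a b c d N k l * T l j = inv_conn_coeff q a c (b * inverse q ^ (N - k)) k j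
      * conn_coeff q (b * q * inverse q ^ (N - j)) (c * q ^ j) d (l - j) (N - l)"
    if "j \<le> k" "j \<le> l" "l \<le> N" for j l
    unfolding T_def using qpoch_nonzero_mono[OF bd that(1)] cd[OF that(3)]
    by (rule mixed_term_factorization[OF q qN \<open>k \<le> N\<close> that(2,3)])
  have "(\<Sum>l\<le>N. mixed_conn_coeff q a b c d N k l * qpoch (c * x) q l * qpoch (d * x) q (N - l))
      = (\<Sum>l\<le>N. \<Sum>j\<le>k. F l j)"
    unfolding mixed_conn_coeff_def phi43_def F_def T_def by (simp add: sum_distrib_left sum_distrib_right mult.assoc)
  also have "\<dots> = (\<Sum>j\<le>k. \<Sum>l\<le>N. F l j)"
    by (rule sum.swap)
  also have "\<dots> = (\<Sum>j\<le>k. \<Sum>l = j..N. F l j)"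
    using vanish by (intro sum.cong refl sum.mono_neutral_right) auto
  finally show ?thesis
    using \<open>k \<le> N\<close> by (simp add: F_def factor mult.assoc flip: mult.assoc[of "mixed_prefactor q a b c d N k _"])
qed

lemma nodes_distinct_if_qpoch_nonzero:
  fixes q c d :: complex
  assumes q: "q \<noteq> 0" and c: "c \<noteq> 0" and d: "d \<noteq> 0"
    and cd: "\<And>l. l \<le> N \<Longrightarrow> qpoch (q powi (int l - int N) * c / d) q l \<noteq> 0"
    and dc: "\<And>l. l \<le> N \<Longrightarrow> qpoch (q powi (- int l) * d / c) q (N - l) \<noteq> 0"
    and "s + t < N"
  shows "c * q ^ s \<noteq> d * q ^ t"
proof
  assume eq: "c * q ^ s = d * q ^ t"
  show False
  proof (cases "t \<le> s")
    case True
    then have "d = c * q ^ (s - t)"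
      using eq q by (simp add: power_diff field_simps)
    then have "q powi (- int (s - t)) * d / c * q ^ 0 = 1"
      using q c by (simp add: power_int_minus_nat power_inverse field_simps)
    moreover have "0 < N - (s - t)"
      using \<open>s + t < N\<close> by simp
    ultimately have "qpoch (q powi (- int (s - t)) * d / c) q (N - (s - t)) = 0"
      unfolding qpoch_eq_0_iff by blast
    then show False
      using dc[of "s - t"] \<open>s + t < N\<close> by simp
  next
    case False
    then have "c = d * q ^ (t - s)"
      using eq q by (simp add: power_diff field_simps)
    moreover have "int (N - (t - s)) - int N = - int (t - s)"
      using \<open>s + t < N\<close> by simp
    ultimately have "q powi (int (N - (t - s)) - int N) * c / d * q ^ 0 = 1"
      using q d by (simp add: power_int_minus_nat power_inverse field_simps)
    moreover have "0 < N - (t - s)"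
      using \<open>s + t < N\<close> by simp
    ultimately have "qpoch (q powi (int (N - (t - s)) - int N) * c / d) q (N - (t - s)) = 0"
      unfolding qpoch_eq_0_iff by blast
    then show False
      using cd[of "N - (t - s)"] by simp
  qed
qed

lemma shifted_node_distinct_if_qpoch_nonzero:
  fixes q b c :: complex
  assumes q: "q \<noteq> 0" and c: "c \<noteq> 0" and bc: "qpoch (q powi (1 - int N) * b / c) q k \<noteq> 0"
    and "k \<le> N" and "i < k"
  shows "b * inverse q ^ (N - k) \<noteq> c * q ^ i"
proof
  assume eq: "b * inverse q ^ (N - k) = c * q ^ i"
  have "q ^ N = q ^ (N - k) * q ^ k" "q ^ k = q * q ^ i * q ^ (k - Suc i)"
    using assms(4,5) by (simp_all flip: power_add power_Suc)
  then have "q powi (1 - int N) * b / c * q ^ (k - Suc i) = b * inverse q ^ (N - k) / (c * q ^ i)"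
    using q c by (simp add: power_int_1_minus_nat power_inverse field_simps)
  then have "q powi (1 - int N) * b / c * q ^ (k - Suc i) = 1"
    using eq q c by simp
  then have "qpoch (q powi (1 - int N) * b / c) q k = 0"
    unfolding qpoch_eq_0_iff using \<open>i < k\<close> by (intro exI[of _ "k - Suc i"]) simp
  then show False
    using bc by simp
qed

lemma sum_atMost_shift_atLeastAtMost:
  fixes f :: "nat \<Rightarrow> 'a::comm_monoid_add"
  shows "j \<le> N \<Longrightarrow> (\<Sum>m\<le>N - j. f (j + m)) = (\<Sum>l = j..N. f l)"
  using sum.shift_bounds_cl_nat_ivl[of f 0 j "N - j"] by (simp add: atLeast0AtMost add.commute)

lemma qpoch_product_expansion:
  fixes q a b c d x :: complex
  assumes q: "q \<noteq> 0" and a: "a \<noteq> 0" and c: "c \<noteq> 0" and d: "d \<noteq> 0"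
    and qN: "qpoch q q N \<noteq> 0" and "k \<le> N" and ca: "qpoch (c / a) q k \<noteq> 0"
    and bc: "\<And>i. i < k \<Longrightarrow> b * inverse q ^ (N - k) \<noteq> c * q ^ i"
    and cd: "\<And>s t. s + t < N \<Longrightarrow> c * q ^ s \<noteq> d * q ^ t"
  shows "qpoch (a * x) (inverse q) k * qpoch (b * x) (inverse q) (N - k)
    = (\<Sum>j\<le>k. \<Sum>l = j..N. inv_conn_coeff q a c (b * inverse q ^ (N - k)) k j
        * conn_coeff q (b * q * inverse q ^ (N - j)) (c * q ^ j) d (l - j) (N - l)
        * qpoch (c * x) q l * qpoch (d * x) q (N - l))"
proof -
  define h where "h = b * inverse q ^ (N - k)"
  have "qpoch q q k \<noteq> 0"
    using qN \<open>k \<le> N\<close> by (rule qpoch_nonzero_mono)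
  then have "qpoch (a * x) (inverse q) k
      = (\<Sum>j\<le>k. inv_conn_coeff q a c h k j * qpoch (c * x) q j * qpoch (h * x) (inverse q) (k - j))"
    using qpoch_inverse_base_expansion[OF q a c _ ca] bc unfolding h_def by blast
  moreover have "qpoch (c * x) q j * (qpoch (h * x) (inverse q) (k - j) * qpoch (b * x) (inverse q) (N - k))
      = (\<Sum>l = j..N. conn_coeff q (b * q * inverse q ^ (N - j)) (c * q ^ j) d (l - j) (N - l)
          * qpoch (c * x) q l * qpoch (d * x) q (N - l))"
    if "j \<le> k" for j
  proof -
    have "qpoch (h * x) (inverse q) (k - j) * qpoch (b * x) (inverse q) (N - k) = qpoch (b * x) (inverse q) (N - j)"
      using qpoch_add[of "b * x" "inverse q" "N - k" "k - j"] that \<open>k \<le> N\<close>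
      unfolding h_def by (simp add: mult_ac)
    also have "\<dots> = qpoch (b * q * inverse q ^ (N - j) * x) q (N - j)"
      using q by (simp add: qpoch_inverse_base mult_ac)
    also have "\<dots> = (\<Sum>m\<le>N - j. conn_coeff q (b * q * inverse q ^ (N - j)) (c * q ^ j) d m (N - j - m)
        * qpoch (c * q ^ j * x) q m * qpoch (d * x) q (N - j - m))"
    proof (rule qpoch_expansion)
      show "qpoch q q (N - j) \<noteq> 0"
        using qN by (rule qpoch_nonzero_mono) simp
      show "c * q ^ j * q ^ s \<noteq> d * q ^ t" if "s + t < N - j" for s t
        using cd[of "j + s" t] that by (simp add: power_add mult.assoc)
    qed (use q c d in simp_all)
    finally show ?thesis
      using that \<open>k \<le> N\<close>
      by (simp add: sum_distrib_left qpoch_add mult_ac flip: sum_atMost_shift_atLeastAtMost)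
  qed
  ultimately show ?thesis
    unfolding h_def[symmetric] by (simp add: sum_distrib_left sum_distrib_right mult.assoc)
qed

lemma mixed_connection_formula:
  fixes q a b c d x :: complex
  assumes q: "q \<noteq> 0" and a: "a \<noteq> 0" and c: "c \<noteq> 0" and d: "d \<noteq> 0"
    and qN: "qpoch q q N \<noteq> 0" and "k \<le> N"
    and cd: "\<And>l. l \<le> N \<Longrightarrow> qpoch (q powi (int l - int N) * c / d) q l \<noteq> 0"
    and dc: "\<And>l. l \<le> N \<Longrightarrow> qpoch (q powi (- int l) * d / c) q (N - l) \<noteq> 0"
    and bc: "qpoch (q powi (1 - int N) * b / c) q k \<noteq> 0"
    and ca: "qpoch (c / a) q k \<noteq> 0"
    and bd: "qpoch (q powi (1 - int N) * b / d) q k \<noteq> 0"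
  shows "qpoch (a * x) (inverse q) k * qpoch (b * x) (inverse q) (N - k)
    = (\<Sum>l\<le>N. mixed_conn_coeff q a b c d N k l * qpoch (c * x) q l * qpoch (d * x) q (N - l))"
proof -
  have "b * inverse q ^ (N - k) \<noteq> c * q ^ i" if "i < k" for i
    using q c bc \<open>k \<le> N\<close> that by (rule shifted_node_distinct_if_qpoch_nonzero)
  moreover have "c * q ^ s \<noteq> d * q ^ t" if "s + t < N" for s t
    using q c d cd dc that by (rule nodes_distinct_if_qpoch_nonzero)
  ultimately have "qpoch (a * x) (inverse q) k * qpoch (b * x) (inverse q) (N - k)
    = (\<Sum>j\<le>k. \<Sum>l = j..N. inv_conn_coeff q a c (b * inverse q ^ (N - k)) k j
        * conn_coeff q (b * q * inverse q ^ (N - j)) (c * q ^ j) d (l - j) (N - l)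
        * qpoch (c * x) q l * qpoch (d * x) q (N - l))"
    by (rule qpoch_product_expansion[OF q a c d qN \<open>k \<le> N\<close> ca])
  also have "\<dots> = (\<Sum>l\<le>N. mixed_conn_coeff q a b c d N k l * qpoch (c * x) q l * qpoch (d * x) q (N - l))"
    by (rule mixed_conn_coeff_sum_as_double_sum[symmetric, OF q qN \<open>k \<le> N\<close> cd bd])
  finally show ?thesis .
qed

theorem mainTheorem4:
  fixes a b c d q :: complex and N :: nat
  assumes "q \<noteq> 0" and "a \<noteq> 0" and "c \<noteq> 0" and "d \<noteq> 0"
    and "qpoch q q N \<noteq> 0"
    and "\<forall>l\<le>N. qpoch (q powi (int l - int N) * c / d) q l \<noteq> 0
                 \<and> qpoch (q powi (- int l) * d / c) q (N - l) \<noteq> 0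
                 \<and> qpoch (q powi (1 - int N) * b / c) q l \<noteq> 0"
    and "\<forall>j\<le>N. qpoch (q powi (- int N)) q j \<noteq> 0
                 \<and> qpoch (c / a) q j \<noteq> 0
                 \<and> qpoch (q powi (1 - int N) * b / d) q j \<noteq> 0"
  shows "\<forall>k\<le>N. \<forall>x::complex.
     qpoch (a * x) (inverse q) k * qpoch (b * x) (inverse q) (N - k) =
     (\<Sum>l\<le>N.
        (q powi (int l * (int l - int N)) * qbinom q N l *
         (qpoch (q powi (1 - int N) * b / d) q l
          * qpoch (q powi (1 - int N) * b / c) q (N - l)
          * qpoch (q powi (1 - int k) * a / c) q k)
         / (qpoch (q powi (int l - int N) * c / d) q l
            * qpoch (q powi (- int l) * d / c) q (N - l)
            * qpoch (q powi (1 - int N) * b / c) q k)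
         * phi43 k (q powi (- int k)) (q powi (- int l))
                   (q powi (int k - int N) * b / a) (q powi (int l - int N) * c / d)
                   (q powi (- int N)) (c / a) (q powi (1 - int N) * b / d) q q)
        * qpoch (c * x) q l * qpoch (d * x) q (N - l))"
proof -
  have "qpoch (a * x) (inverse q) k * qpoch (b * x) (inverse q) (N - k)
      = (\<Sum>l\<le>N. mixed_conn_coeff q a b c d N k l * qpoch (c * x) q l * qpoch (d * x) q (N - l))"
    if "k \<le> N" for k x
    using assms(6,7) that by (intro mixed_connection_formula[OF assms(1-5) that]) auto
  then show ?thesis
    unfolding mixed_conn_coeff_def mixed_prefactor_def by blast
qed

end
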